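(* Let $\delta_{\max}\approx0.453$ be the positive real root of $\delta^3+2\delta-1$ and define $\rho:[0,\delta_{\max}]\to\mathbb{R}$ by $\rho(\delta)=-\frac{2\delta^2+3}{2}+\frac{\sqrt{4\delta^2+4\delta+9}}{2}$. Then $\rho$ attains a maximum value $r_{\max}$ on $[0,\delta_{\max}]$ (numerically $r_{\max}\approx 0.0386$), and $r_{\max}\le r_{\mathrm{bif}}(-1)$.
   Context: $f_c(z)=z^2+c$, extended to $\widehat{\mathbb{C}}$ by $f_c(\infty)=\infty$. For $c\in\mathbb{C}$, $r\ge0$, $G_{c,r}$ is the semigroup under composition generated by $\{f_{c'}:|c'-c|\le r\}$. A minimal set of a polynomial semigroup $G$ is a minimal element, with respect to inclusion, of the family of non-empty compact $L\subset\widehat{\mathbb{C}}$ with $g(L)\subset L$ for all $g\in G$; it is planar if $\infty\notin L$. The bifurcation radius $r_{\mathrm{bif}}(c)$ is the supremum of those $r\ge0$ for which $G_{c,r}$ has a planar minimal set (equivalently the infimum of those $r\ge0$ for which $G_{c,r}$ has no planar minimal set); by prior work this value is attained and $G_{c,r}$ has a planar minimal set iff $r\le r_{\mathrm{bif}}(c)$. *)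

theory Defs
  imports "HOL-Analysis.Analysis" "HOL-Library.Extended_Real"
begin

definition fq :: "complex \<Rightarrow> complex \<Rightarrow> complex" where
  "fq c z = z^2 + c"

inductive_set gen_semigroup :: "('a \<Rightarrow> 'a) set \<Rightarrow> ('a \<Rightarrow> 'a) set"
  for S :: "('a \<Rightarrow> 'a) set" where
  gen: "g \<in> S \<Longrightarrow> g \<in> gen_semigroup S"
| comp: "g \<in> gen_semigroup S \<Longrightarrow> h \<in> gen_semigroup S \<Longrightarrow> g \<circ> h \<in> gen_semigroup S"

definition G_semigroup :: "complex \<Rightarrow> real \<Rightarrow> (complex \<Rightarrow> complex) set" where
  "G_semigroup c r = gen_semigroup {fq c' | c'. cmod (c' - c) \<le> r}"

definition forward_invariant :: "('a \<Rightarrow> 'a) set \<Rightarrow> 'a set \<Rightarrow> bool" where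
  "forward_invariant G L \<longleftrightarrow> (\<forall>g\<in>G. g ` L \<subseteq> L)"

text \<open>A planar minimal set: a nonempty compact invariant subset of the plane which is
  minimal w.r.t. inclusion among nonempty compact invariant subsets of the Riemann sphere.
  Any such subset of a planar set is itself planar, so only planar competitors matter.\<close>
definition planar_minimal_set :: "(complex \<Rightarrow> complex) set \<Rightarrow> complex set \<Rightarrow> bool" where
  "planar_minimal_set G L \<longleftrightarrow>
     L \<noteq> {} \<and> compact L \<and> forward_invariant G L \<and>
     (\<forall>K. K \<noteq> {} \<and> compact K \<and> forward_invariant G K \<and> K \<subseteq> L \<longrightarrow> K = L)"

definition r_bif :: "complex \<Rightarrow> ereal" where
  "r_bif c = Sup {ereal r | r. r \<ge> 0 \<and> (\<exists>L. planar_minimal_set (G_semigroup c r) L)}"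

definition delta_max :: real where
  "delta_max = (THE d. d > 0 \<and> d^3 + 2*d - 1 = 0)"

definition rho :: "real \<Rightarrow> real" where
  "rho d = - (2*d^2 + 3) / 2 + sqrt (4*d^2 + 4*d + 9) / 2"

end

theory Submission
  imports Defs
begin

text \<open>
  For \<open>0 \<le> \<delta>\<close> put \<open>r = \<rho> \<delta>\<close> and \<open>b = \<delta>\<^sup>2 + r\<close>; the formula for \<open>\<rho>\<close> is chosen so that
  \<open>b\<^sup>2 + 2b + r = \<delta>\<close>. Then the union of the discs \<open>|z| \<le> \<delta>\<close> and \<open>|z + 1| \<le> b\<close> is mapped into
  itself by every \<open>z\<^sup>2 + c\<close> with \<open>|c + 1| \<le> r\<close>: the first disc lands in the second, and writing
  \<open>z = w - 1\<close> the second lands in the first since \<open>|w\<^sup>2 - 2w + (c + 1)| \<le> b\<^sup>2 + 2b + r\<close>.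
  By Zorn's lemma this compact invariant set contains a minimal one, so the semigroup for
  \<open>c = -1\<close> and radius \<open>r\<close> has a planar minimal set whenever \<open>\<rho> \<delta> \<ge> 0\<close>, in particular
  at a maximiser of \<open>\<rho>\<close> on \<open>[0, \<delta>\<^sub>m\<^sub>a\<^sub>x]\<close>, where \<open>\<rho> \<ge> \<rho> 0 = 0\<close>.
\<close>

lemma subset_Zorn_nonempty_Inter:
  assumes "A \<noteq> {}" and chain: "\<And>C. C \<noteq> {} \<Longrightarrow> subset.chain A C \<Longrightarrow> \<Inter>C \<in> A"
  shows "\<exists>M\<in>A. \<forall>X\<in>A. X \<subseteq> M \<longrightarrow> X = M"
proof -
  have "\<exists>M\<in>uminus ` A. \<forall>X\<in>uminus ` A. M \<subseteq> X \<longrightarrow> X = M"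
  proof (rule subset_Zorn_nonempty)
    show "uminus ` A \<noteq> {}" using assms(1) by simp
  next
    fix C assume "C \<noteq> {}" "subset.chain (uminus ` A) C"
    then have "uminus ` C \<noteq> {}" "subset.chain A (uminus ` C)"
      by (auto simp: subset_chain_def)
    then have "\<Inter>(uminus ` C) \<in> A" by (rule chain)
    moreover have "\<Union>C = - \<Inter>(uminus ` C)" by auto
    ultimately show "\<Union>C \<in> uminus ` A" by (rule rev_image_eqI)
  qed
  then show ?thesis by (auto simp: image_iff)
qed

lemma forward_invariant_gen_semigroup:
  assumes "\<And>g. g \<in> S \<Longrightarrow> g ` L \<subseteq> L"
  shows "forward_invariant (gen_semigroup S) L"
  unfolding forward_invariant_def
proof
  fix h assume "h \<in> gen_semigroup S"
  then show "h ` L \<subseteq> L"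
  proof (induction rule: gen_semigroup.induct)
    case (gen g)
    then show ?case by (rule assms)
  next
    case (comp g h)
    then show ?case by (auto simp: image_comp[symmetric])
  qed
qed

lemma forward_invariant_Inter:
  assumes "\<And>K. K \<in> C \<Longrightarrow> forward_invariant G K"
  shows "forward_invariant G (\<Inter>C)"
  using assms unfolding forward_invariant_def by blast

lemma planar_minimal_set_exists:
  assumes "L \<noteq> {}" "compact L" "forward_invariant G L"
  shows "\<exists>M. planar_minimal_set G M"
proof -
  define A where "A = {K. K \<noteq> {} \<and> compact K \<and> forward_invariant G K \<and> K \<subseteq> L}"
  have "\<exists>M\<in>A. \<forall>K\<in>A. K \<subseteq> M \<longrightarrow> K = M"
  proof (rule subset_Zorn_nonempty_Inter)
    show "A \<noteq> {}" using assms by (auto simp: A_def)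
  next
    fix C assume "C \<noteq> {}" "subset.chain A C"
    then have C: "C \<noteq> {}" "C \<subseteq> A" "\<And>S T. S \<in> C \<and> T \<in> C \<Longrightarrow> S \<subseteq> T \<or> T \<subseteq> S"
      by (auto simp: subset_chain_def)
    then have "\<Inter>C \<noteq> {}" by (intro compact_chain) (auto simp: A_def)
    moreover have "compact (\<Inter>C)" using C by (intro compact_Inter) (auto simp: A_def)
    moreover have "forward_invariant G (\<Inter>C)" using C by (intro forward_invariant_Inter) (auto simp: A_def)
    moreover have "\<Inter>C \<subseteq> L" using C(1,2) unfolding A_def by blast
    ultimately show "\<Inter>C \<in> A" by (simp add: A_def)
  qed
  then obtain M where "M \<in> A" "\<forall>K\<in>A. K \<subseteq> M \<longrightarrow> K = M" by blast
  then have "planar_minimal_set G M"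
    by (auto simp: A_def planar_minimal_set_def)
  then show ?thesis by blast
qed

lemma r_bif_lower_bound:
  assumes "r \<ge> 0" "L \<noteq> {}" "compact L" "forward_invariant (G_semigroup c r) L"
  shows "ereal r \<le> r_bif c"
proof -
  obtain M where "planar_minimal_set (G_semigroup c r) M"
    using planar_minimal_set_exists assms(2-4) by blast
  with \<open>r \<ge> 0\<close> show ?thesis
    unfolding r_bif_def by (blast intro: Sup_upper)
qed

lemma two_discs_invariant:
  fixes d b r :: real
  assumes "d^2 + r \<le> b" and "b^2 + 2*b + r \<le> d"
  shows "forward_invariant (G_semigroup (-1) r) (cball 0 d \<union> cball (-1) b)"
    (is "forward_invariant _ ?L")
proof -
  have maps_into: "fq c z \<in> ?L" if c: "cmod (c + 1) \<le> r" and z: "z \<in> ?L" for c z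
  proof (cases "cmod z \<le> d")
    case True
    have "cmod (fq c z + 1) \<le> cmod (z^2) + cmod (c + 1)"
      using norm_triangle_ineq[of "z^2" "c + 1"] by (simp add: fq_def add.assoc)
    also have "\<dots> \<le> d^2 + r"
      using True c by (auto simp: norm_power intro!: add_mono power_mono)
    finally have "dist (fq c z) (-1) \<le> b" using assms(1) by (simp add: dist_norm)
    then show ?thesis by (simp add: dist_commute)
  next
    case False
    define w where "w = z + 1"
    have w: "cmod w \<le> b"
      using z False by (auto simp: w_def dist_norm norm_minus_commute)
    have "fq c z = w^2 - 2*w + (c + 1)"
      by (simp add: fq_def w_def power2_eq_square algebra_simps)
    then have "cmod (fq c z) \<le> cmod (w^2 - 2*w) + cmod (c + 1)"
      by (simp add: norm_triangle_ineq)
    also have "\<dots> \<le> cmod (w^2) + cmod (2*w) + cmod (c + 1)"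
      using norm_triangle_ineq4[of "w^2" "2*w"] by simp
    also have "\<dots> \<le> b^2 + 2*b + r"
      using w c by (auto simp: norm_power norm_mult intro!: add_mono power_mono)
    finally show ?thesis using assms(2) by simp
  qed
  then show ?thesis
    unfolding G_semigroup_def
    by (intro forward_invariant_gen_semigroup image_subsetI)
      (auto simp del: Un_iff mem_cball intro: maps_into)
qed

lemma rho_radius_identity:
  fixes d :: real
  defines "b \<equiv> d^2 + rho d"
  shows "b^2 + 2*b + rho d = d"
proof -
  define s where "s = sqrt (4*d^2 + 4*d + 9)"
  have "4*d^2 + 4*d + 9 = (2*d + 1)^2 + 8" by algebra
  then have "4*d^2 + 4*d + 9 \<ge> 0" using zero_le_power2[of "2*d + 1"] by linarith
  then have "s^2 = 4*d^2 + 4*d + 9" unfolding s_def by simp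
  moreover have "s = 2*b + 3" by (simp add: b_def rho_def s_def field_simps)
  ultimately have "4*(b^2 + 3*b) = 4*(d^2 + d)" by (simp add: power2_eq_square algebra_simps)
  then have "b^2 + 3*b = d^2 + d" by simp
  moreover have "b = d^2 + rho d" by (simp add: b_def)
  ultimately show ?thesis by linarith
qed

lemma rho_le_r_bif:
  assumes "d \<ge> 0" "rho d \<ge> 0"
  shows "ereal (rho d) \<le> r_bif (-1)"
proof (rule r_bif_lower_bound)
  show "forward_invariant (G_semigroup (-1) (rho d)) (cball 0 d \<union> cball (-1) (d^2 + rho d))"
    by (rule two_discs_invariant[OF order_refl rho_radius_identity[THEN eq_refl]])
qed (use assms in auto)

lemma delta_max_root: "delta_max > 0 \<and> delta_max^3 + 2*delta_max - 1 = 0"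
proof -
  define p where "p = (\<lambda>d::real. d^3 + 2*d - 1)"
  have "\<exists>d\<ge>0. d \<le> 1 \<and> p d = 0"
    by (rule IVT) (auto simp: p_def intro!: continuous_intros)
  then obtain d where d: "0 \<le> d" "p d = 0" by blast
  have "strict_mono_on {0..} p"
  proof (rule strict_mono_onI)
    fix r s :: real assume "r \<in> {0..}" "r < s"
    then have "r^3 < s^3" by (intro power_strict_mono) auto
    with \<open>r < s\<close> show "p r < p s" by (simp add: p_def)
  qed
  then have inj: "inj_on p {0..}" by (rule strict_mono_on_imp_inj_on)
  have "d \<noteq> 0"
  proof
    assume "d = 0"
    with d(2) show False by (simp add: p_def)
  qed
  with d have root: "d > 0 \<and> p d = 0" by simp
  have "\<exists>!d. d > 0 \<and> p d = 0"
  proof (rule ex1I[of _ d])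
    fix e assume "e > 0 \<and> p e = 0"
    with root show "e = d" by (auto intro: inj_onD[OF inj])
  qed (fact root)
  then show ?thesis unfolding delta_max_def p_def by (rule theI')
qed
theorem theorem4p18:
  shows "\<exists>r_max. (\<exists>d\<in>{0..delta_max}. rho d = r_max) \<and> (\<forall>d\<in>{0..delta_max}. rho d \<le> r_max)
           \<and> ereal r_max \<le> r_bif (-1)"
proof -
  have "0 \<in> {0..delta_max}" using delta_max_root by simp
  moreover have "continuous_on {0..delta_max} rho"
    unfolding rho_def by (intro continuous_intros) simp_all
  ultimately obtain d where d: "d \<in> {0..delta_max}" "\<forall>e\<in>{0..delta_max}. rho e \<le> rho d"
    using continuous_attains_sup[OF compact_Icc] by blast
  with \<open>0 \<in> {0..delta_max}\<close> have "rho d \<ge> rho 0" by blast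
  then have "rho d \<ge> 0" by (simp add: rho_def)
  with d have "ereal (rho d) \<le> r_bif (-1)" by (intro rho_le_r_bif) auto
  with d show ?thesis by blast
qed

end
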